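(* Let $p>0$, $b\ge1$, and let $D(t)=\frac{(2b+1)^p}{2^p\Gamma(p)}\int_0^t s^{p-1}e^{-(b+\frac12)s}ds$, $t\ge0$. Let $f:\mathbb{R}\to\mathbb{R}$ be defined on $[0,1)$ as the inverse of the increasing bijection $[1,\infty)\ni t\mapsto D(\log t)\in[0,1)$, and $f=0$ outside $[0,1)$. Take $c=0$, $u(x)=x$ (so $\beta=1$). Then $\int_{\mathrm{supp}(f)}|f(s)|^{\beta+\frac{c-1}{2}}ds<\infty$, and there is $\gamma>0$ with $|m_{f,\pm}(x)|\ge\gamma(1+|x|)^{-p}$ for all $x\in\mathbb{R}$.
   Context: $m_{f,+}(x)=\int_{\mathrm{supp}(f)} u(f(s))|f(s)|^{(c-1)/2}e^{-ix\log|f(s)|}ds$, $m_{f,-}(x)=\int_{\mathrm{supp}(f)} u(f(s))|f(s)|^{(c-1)/2}e^{-ix\log|f(s)|}\,\mathrm{sgn}f(s)\,ds$, where $\mathrm{supp}(f)=\{f\ne0\}$. *)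

theory Defs
  imports "HOL-Analysis.Analysis"
begin

definition Dfun :: "real \<Rightarrow> real \<Rightarrow> real \<Rightarrow> real" where
  "Dfun p b t = (2*b+1) powr p / (2 powr p * Gamma p) *
      (LINT s:{0..t}|lborel. s powr (p-1) * exp (-(b + 1/2) * s))"

definition ffun :: "real \<Rightarrow> real \<Rightarrow> real \<Rightarrow> real" where
  "ffun p b s = (if s \<in> {0..<1} then the_inv_into {1..} (\<lambda>t. Dfun p b (ln t)) s else 0)"

definition suppf :: "(real \<Rightarrow> real) \<Rightarrow> real set" where
  "suppf f = {s. f s \<noteq> 0}"

definition m_plus :: "(real \<Rightarrow> real) \<Rightarrow> real \<Rightarrow> (real \<Rightarrow> real) \<Rightarrow> real \<Rightarrow> complex" where
  "m_plus u c f x = (LINT s:suppf f|lborel.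
      complex_of_real (u (f s) * \<bar>f s\<bar> powr ((c-1)/2)) *
      exp (- \<i> * complex_of_real x * complex_of_real (ln \<bar>f s\<bar>)))"

definition m_minus :: "(real \<Rightarrow> real) \<Rightarrow> real \<Rightarrow> (real \<Rightarrow> real) \<Rightarrow> real \<Rightarrow> complex" where
  "m_minus u c f x = (LINT s:suppf f|lborel.
      complex_of_real (u (f s) * \<bar>f s\<bar> powr ((c-1)/2)) *
      exp (- \<i> * complex_of_real x * complex_of_real (ln \<bar>f s\<bar>)) *
      complex_of_real (sgn (f s)))"

end

theory Submission
  imports Defs "HOL-Probability.Probability"
begin

text \<open>
  D is the distribution function of the Gamma law with shape p and rate b + 1/2, so ln \<circ> f is a
  quantile function of that law and pushes Lebesgue measure on [0,1) forward to it. As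
  u(f)|f|^(-1/2) = |f|^(1/2) = exp(y/2) and sgn f = 1 on the support, this turns the integrability
  claim into the finiteness of the integral of y^(p-1) e^(-by) over (0,\<infinity>), and both m_f,+(x) and
  m_f,-(x) into (b+1/2)^p / Gamma(p) times the complex Gamma integral of y^(p-1) e^(-(b+ix)y).
  That integral equals Gamma(p) / (b+ix)^p: differentiating under the integral sign and integrating
  by parts shows that its product with (b+ix)^p has derivative zero in x. Hence
  |m_f,\<plusminus>(x)| = ((b+1/2)/|b+ix|)^p \<ge> (1+|x|)^(-p), because |b+ix| \<le> (b+1/2)(1+|x|) for b \<ge> 1/2.
\<close>

lemma nn_integral_powr_mult_exp:
  fixes q c :: real
  assumes q: "q > 0" and c: "c > 0"
  shows "(\<integral>\<^sup>+ y. ennreal (indicator {0<..} y * (y powr (q-1) * exp (-c*y))) \<partial>lborel)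
         = ennreal (Gamma q / c powr q)"
proof -
  have "ennreal (Gamma q) = (\<integral>\<^sup>+t. ennreal (indicator {0..} t * t powr (q - 1) / exp t) \<partial>lborel)"
    using Gamma_conv_nn_integral_real[OF q] by simp
  also have "\<dots> = ennreal c * (\<integral>\<^sup>+y. ennreal (indicator {0..} (0 + c*y) * (0 + c*y) powr (q - 1) / exp (0 + c*y)) \<partial>lborel)"
    using nn_integral_real_affine[of "\<lambda>t. ennreal (indicator {0..} t * t powr (q - 1) / exp t)" c 0] c
    by simp
  also have "(\<lambda>y. ennreal (indicator {0..} (0 + c*y) * (0 + c*y) powr (q - 1) / exp (0 + c*y)))
     = (\<lambda>y. ennreal (c powr (q-1)) * ennreal (indicator {0<..} y * (y powr (q-1) * exp (-c*y))))"
  proof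
    fix y
    show "ennreal (indicator {0..} (0 + c*y) * (0 + c*y) powr (q - 1) / exp (0 + c*y)) =
      ennreal (c powr (q-1)) * ennreal (indicator {0<..} y * (y powr (q-1) * exp (-c*y)))"
    proof (cases "y > 0")
      case True
      then show ?thesis using c
        by (simp add: ennreal_mult'[symmetric] powr_mult exp_minus field_simps indicator_def zero_le_mult_iff)
    next
      case False
      then show ?thesis using c by (auto simp: indicator_def zero_le_mult_iff)
    qed
  qed
  also have "ennreal c * (\<integral>\<^sup>+y. ennreal (c powr (q-1)) * ennreal (indicator {0<..} y * (y powr (q-1) * exp (-c*y))) \<partial>lborel)
     = ennreal (c * c powr (q-1)) * (\<integral>\<^sup>+y. ennreal (indicator {0<..} y * (y powr (q-1) * exp (-c*y))) \<partial>lborel)"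
    using c by (subst nn_integral_cmult) (auto simp: ennreal_mult mult.assoc)
  also have "c * c powr (q-1) = c powr q"
    using c by (simp add: powr_diff)
  finally have Gamma_eq: "ennreal (Gamma q) =
      ennreal (c powr q) * (\<integral>\<^sup>+y. ennreal (indicator {0<..} y * (y powr (q-1) * exp (-c*y))) \<partial>lborel)" .
  have "ennreal (Gamma q / c powr q) = ennreal (Gamma q) / ennreal (c powr q)"
    using c q by (simp add: divide_ennreal Gamma_real_pos)
  also have "\<dots> = (\<integral>\<^sup>+y. ennreal (indicator {0<..} y * (y powr (q-1) * exp (-c*y))) \<partial>lborel)"
    unfolding Gamma_eq using c by (subst mult.commute, subst ennreal_mult_divide_eq) auto
  finally show ?thesis by simp
qed

lemma
  fixes q c :: real
  assumes q: "q > 0" and c: "c > 0"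
  shows set_integrable_powr_mult_exp: "set_integrable lborel {0<..} (\<lambda>y. y powr (q-1) * exp (-c*y))"
    and set_integral_powr_mult_exp: "(LINT y:{0<..}|lborel. y powr (q-1) * exp (-c*y)) = Gamma q / c powr q"
proof -
  have "integrable lborel (\<lambda>y. indicator {0<..} y * (y powr (q-1) * exp (-c*y))) \<and>
        integral\<^sup>L lborel (\<lambda>y. indicator {0<..} y * (y powr (q-1) * exp (-c*y))) = Gamma q / c powr q"
    using nn_integral_powr_mult_exp[OF q c]
    by (subst (asm) nn_integral_eq_integrable) (auto simp: Gamma_real_pos q c)
  then show "set_integrable lborel {0<..} (\<lambda>y. y powr (q-1) * exp (-c*y))"
    "(LINT y:{0<..}|lborel. y powr (q-1) * exp (-c*y)) = Gamma q / c powr q"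
    by (simp_all add: set_integrable_def set_lebesgue_integral_def)
qed

definition gamma_kernel :: "real \<Rightarrow> complex \<Rightarrow> real \<Rightarrow> complex" where
  "gamma_kernel k z t = complex_of_real (t powr k) * exp (- z * complex_of_real t)"

definition gamma_transform :: "real \<Rightarrow> complex \<Rightarrow> complex" where
  "gamma_transform k z = (LINT t:{0<..}|lborel. gamma_kernel k z t)"

lemma gamma_kernel_measurable [measurable]: "gamma_kernel k z \<in> borel_measurable borel"
  unfolding gamma_kernel_def by measurable

lemma norm_gamma_kernel: "norm (gamma_kernel k z t) = t powr k * exp (- Re z * t)"
  by (simp add: gamma_kernel_def norm_mult norm_exp_eq_Re)

lemma set_integrable_gamma_kernel:
  assumes "k > -1" and "Re z > 0"
  shows "set_integrable lborel {0<..} (gamma_kernel k z)"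
proof -
  have "set_integrable lborel {0<..} (\<lambda>t. t powr (k + 1 - 1) * exp (- Re z * t))"
    using assms by (intro set_integrable_powr_mult_exp) auto
  then show ?thesis
    unfolding set_integrable_def
    by (rule Bochner_Integration.integrable_bound) (auto simp: indicator_def norm_gamma_kernel)
qed

lemma gamma_kernel_shift_remainder:
  assumes t: "t > 0"
  shows "norm (gamma_kernel k (z + \<i> * complex_of_real h) t - gamma_kernel k z t
                 + \<i> * complex_of_real h * gamma_kernel (k + 1) z t)
         \<le> h\<^sup>2 / 2 * (t powr (k + 2) * exp (- Re z * t))"
proof -
  have shift: "gamma_kernel k (z + \<i> * complex_of_real h) t = gamma_kernel k z t * iexp (- h * t)"
    unfolding gamma_kernel_def by (simp add: exp_add[symmetric] algebra_simps)
  have succ: "gamma_kernel (k + 1) z t = complex_of_real t * gamma_kernel k z t"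
    using t by (simp add: gamma_kernel_def powr_add)
  have "norm (gamma_kernel k (z + \<i> * complex_of_real h) t - gamma_kernel k z t
                 + \<i> * complex_of_real h * gamma_kernel (k + 1) z t)
      = norm (gamma_kernel k z t) * norm (iexp (- h * t) - (\<Sum>n\<le>1. (\<i> * complex_of_real (- h * t)) ^ n / fact n))"
    unfolding shift succ by (simp add: norm_mult[symmetric] algebra_simps)
  also have "\<dots> \<le> norm (gamma_kernel k z t) * (\<bar>- h * t\<bar> ^ Suc 1 / fact (Suc 1))"
    by (rule mult_left_mono[OF iexp_approx1]) simp
  also have "\<dots> = h\<^sup>2 / 2 * ((t powr k * t powr 2) * exp (- Re z * t))"
    using t by (simp add: norm_gamma_kernel power_mult_distrib powr_realpow power2_eq_square)
  also have "t powr k * t powr 2 = t powr (k + 2)"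
    by (simp add: powr_add)
  finally show ?thesis .
qed

lemma gamma_transform_shift_remainder:
  assumes k: "k > -1" and z: "Re z > 0"
  shows "norm (gamma_transform k (z + \<i> * complex_of_real h) - gamma_transform k z
                 + \<i> * complex_of_real h * gamma_transform (k + 1) z)
         \<le> h\<^sup>2 / 2 * (Gamma (k + 3) / Re z powr (k + 3))"
proof -
  let ?R = "\<lambda>t. gamma_kernel k (z + \<i> * complex_of_real h) t - gamma_kernel k z t
                 + \<i> * complex_of_real h * gamma_kernel (k + 1) z t"
  have int_shift: "set_integrable lborel {0<..} (gamma_kernel k (z + \<i> * complex_of_real h))"
    using k z by (intro set_integrable_gamma_kernel) auto
  have int_k: "set_integrable lborel {0<..} (gamma_kernel k z)"
    and int_succ: "set_integrable lborel {0<..} (gamma_kernel (k + 1) z)"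
    using k z by (auto intro: set_integrable_gamma_kernel)
  have int_diff: "set_integrable lborel {0<..} (\<lambda>t. gamma_kernel k (z + \<i> * complex_of_real h) t - gamma_kernel k z t)"
    by (rule set_integral_diff(1)[OF int_shift int_k])
  have int_corr: "set_integrable lborel {0<..} (\<lambda>t. \<i> * complex_of_real h * gamma_kernel (k + 1) z t)"
    by (rule set_integrable_mult_right[OF int_succ])
  have int_bound: "set_integrable lborel {0<..} (\<lambda>t. t powr (k + 3 - 1) * exp (- Re z * t))"
    using k z by (intro set_integrable_powr_mult_exp) auto
  have "gamma_transform k (z + \<i> * complex_of_real h) - gamma_transform k z
          + \<i> * complex_of_real h * gamma_transform (k + 1) z = (LINT t:{0<..}|lborel. ?R t)"
    unfolding gamma_transform_def set_integral_add(2)[OF int_diff int_corr]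
      set_integral_diff(2)[OF int_shift int_k] set_integral_mult_right ..
  also have "norm \<dots> \<le> (LINT t:{0<..}|lborel. norm (?R t))"
    by (rule set_integral_norm_bound[OF set_integral_add(1)[OF int_diff int_corr]])
  also have "\<dots> \<le> (LINT t:{0<..}|lborel. h\<^sup>2 / 2 * (t powr (k + 3 - 1) * exp (- Re z * t)))"
  proof (rule set_integral_mono)
    show "set_integrable lborel {0<..} (\<lambda>t. norm (?R t))"
      using set_integral_add(1)[OF int_diff int_corr] by (rule set_integrable_norm)
    show "set_integrable lborel {0<..} (\<lambda>t. h\<^sup>2 / 2 * (t powr (k + 3 - 1) * exp (- Re z * t)))"
      using int_bound by (rule set_integrable_mult_right)
    show "norm (?R t) \<le> h\<^sup>2 / 2 * (t powr (k + 3 - 1) * exp (- Re z * t))" if "t \<in> {0<..}" for t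
      using gamma_kernel_shift_remainder[of t k z h] that by (simp add: ac_simps)
  qed
  also have "\<dots> = h\<^sup>2 / 2 * (Gamma (k + 3) / Re z powr (k + 3))"
    using k z by (simp only: set_integral_mult_right set_integral_powr_mult_exp)
  finally show ?thesis .
qed

lemma has_vector_derivative_gamma_transform:
  assumes k: "k > -1" and a: "a > 0"
  shows "((\<lambda>x. gamma_transform k (complex_of_real a + \<i> * complex_of_real x)) has_vector_derivative
            (- \<i> * gamma_transform (k + 1) (complex_of_real a + \<i> * complex_of_real x))) (at x)"
  unfolding has_vector_derivative_def has_derivative_iff_norm
proof (intro conjI bounded_linear_scaleR_left)
  define z where "z = complex_of_real a + \<i> * complex_of_real x"
  define C where "C = Gamma (k + 3) / a powr (k + 3)"
  define F where "F y = gamma_transform k (complex_of_real a + \<i> * complex_of_real y)" for y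
  define R where "R y = norm (F y - F x - (y - x) *\<^sub>R (- \<i> * gamma_transform (k + 1) z))" for y
  have R_bound: "R y \<le> (y - x)\<^sup>2 / 2 * C" for y
  proof -
    have "complex_of_real a + \<i> * complex_of_real y = z + \<i> * complex_of_real (y - x)"
      by (simp add: z_def algebra_simps)
    then have "F y = gamma_transform k (z + \<i> * complex_of_real (y - x))"
      by (simp only: F_def)
    moreover have "F x = gamma_transform k z"
      by (simp add: F_def z_def)
    ultimately have "F y - F x - (y - x) *\<^sub>R (- \<i> * gamma_transform (k + 1) z)
        = gamma_transform k (z + \<i> * complex_of_real (y - x)) - gamma_transform k z
            + \<i> * complex_of_real (y - x) * gamma_transform (k + 1) z"
      by (simp add: scaleR_conv_of_real algebra_simps)
    moreover have "Re z = a"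
      by (simp add: z_def)
    ultimately show ?thesis
      unfolding R_def C_def using gamma_transform_shift_remainder[OF k, of z "y - x"] a by simp
  qed
  have bound: "\<forall>y. norm (R y / norm (y - x)) \<le> \<bar>y - x\<bar> * C / 2"
  proof
    fix y
    show "norm (R y / norm (y - x)) \<le> \<bar>y - x\<bar> * C / 2"
    proof (cases "y = x")
      case False
      have "R y \<le> \<bar>y - x\<bar> * (\<bar>y - x\<bar> * C / 2)"
        using R_bound[of y] by (simp add: power2_eq_square)
      moreover have "R y \<ge> 0" by (simp add: R_def)
      ultimately show ?thesis
        using False by (simp add: divide_le_eq mult.commute)
    qed (simp add: R_def)
  qed
  have "((\<lambda>y. \<bar>y - x\<bar>) \<longlongrightarrow> 0) (at x)"
    using LIM_zero[OF tendsto_ident_at] by (rule tendsto_rabs_zero)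
  then have lim: "((\<lambda>y. \<bar>y - x\<bar> * C / 2) \<longlongrightarrow> 0) (at x)"
    by (intro tendsto_divide_zero tendsto_mult_left_zero)
  show "((\<lambda>y. norm (F y - F x - (y - x) *\<^sub>R (- \<i> * gamma_transform (k + 1) z)) / norm (y - x))
          \<longlongrightarrow> 0) (at x)"
    unfolding R_def[symmetric] by (rule Lim_null_comparison[OF always_eventually[OF bound] lim])
qed

lemma has_vector_derivative_gamma_kernel:
  assumes t: "t > 0"
  shows "(gamma_kernel k z has_vector_derivative
            (complex_of_real k * gamma_kernel (k - 1) z t - z * gamma_kernel k z t)) (at t)"
proof -
  have d_powr: "((\<lambda>t. complex_of_real (t powr k)) has_vector_derivative complex_of_real (k * t powr (k - 1))) (at t)"
    by (rule has_vector_derivative_of_real[OF has_real_derivative_powr[OF t]])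
  have "((\<lambda>w. exp (- z * w)) has_field_derivative (exp (- z * complex_of_real t) * (- z))) (at (complex_of_real t))"
    by (auto intro!: derivative_eq_intros)
  then have d_exp: "((\<lambda>t. exp (- z * complex_of_real t)) has_vector_derivative (exp (- z * complex_of_real t) * (- z))) (at t)"
    using has_vector_derivative_real_field by fastforce
  show ?thesis
    using has_vector_derivative_mult[OF d_powr d_exp]
    by (simp add: gamma_kernel_def[abs_def] algebra_simps)
qed

lemma gamma_kernel_tendsto_0_at_right:
  assumes "k > 0"
  shows "(gamma_kernel k z \<longlongrightarrow> 0) (at_right 0)"
proof -
  have "((\<lambda>t. t powr k * exp (- Re z * t)) \<longlongrightarrow> 0) (at_right 0)"
    using assms by real_asymp
  then show ?thesis
    by (subst tendsto_norm_zero_iff[symmetric]) (simp add: norm_gamma_kernel)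
qed

lemma gamma_kernel_tendsto_0_at_top:
  assumes "Re z > 0"
  shows "(gamma_kernel k z \<longlongrightarrow> 0) at_top"
proof -
  have "((\<lambda>t. t powr k * exp (- Re z * t)) \<longlongrightarrow> 0) at_top"
    using assms by real_asymp
  then show ?thesis
    by (subst tendsto_norm_zero_iff[symmetric]) (simp add: norm_gamma_kernel)
qed

lemma gamma_transform_integration_by_parts:
  assumes k: "k > 0" and z: "Re z > 0"
  shows "z * gamma_transform k z = complex_of_real k * gamma_transform (k - 1) z"
proof -
  define f where "f t = complex_of_real k * gamma_kernel (k - 1) z t - z * gamma_kernel k z t" for t
  have interval: "einterval 0 \<infinity> = {0<..}"
    by (auto simp: einterval_def zero_ereal_def)
  have int_pred: "set_integrable lborel {0<..} (gamma_kernel (k - 1) z)"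
    and int_k: "set_integrable lborel {0<..} (gamma_kernel k z)"
    using k z by (auto intro: set_integrable_gamma_kernel)
  have int_f: "set_integrable lborel {0<..} f"
    unfolding f_def using int_pred int_k by (intro set_integral_diff(1) set_integrable_mult_right)
  have "(LBINT t=0..\<infinity>. f t) = 0 - 0"
  proof (rule interval_integral_FTC_integrable[where F = "gamma_kernel k z"])
    fix t assume "0 < ereal t" "ereal t < \<infinity>"
    then have t: "t > 0" by (simp add: zero_ereal_def)
    show "(gamma_kernel k z has_vector_derivative f t) (at t)"
      unfolding f_def by (rule has_vector_derivative_gamma_kernel[OF t])
    show "isCont f t"
      unfolding f_def gamma_kernel_def using t by (intro continuous_intros) auto
  next
    show "set_integrable lborel (einterval 0 \<infinity>) f"
      unfolding interval by (rule int_f)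
    show "((gamma_kernel k z \<circ> real_of_ereal) \<longlongrightarrow> 0) (at_right 0)"
      unfolding zero_ereal_def ereal_tendsto_simps1 by (rule gamma_kernel_tendsto_0_at_right[OF k])
    show "((gamma_kernel k z \<circ> real_of_ereal) \<longlongrightarrow> 0) (at_left \<infinity>)"
      unfolding ereal_tendsto_simps1 by (rule gamma_kernel_tendsto_0_at_top[OF z])
  qed simp
  moreover have "(LBINT t=0..\<infinity>. f t) = complex_of_real k * gamma_transform (k - 1) z - z * gamma_transform k z"
    unfolding interval_lebesgue_integral_def interval gamma_transform_def f_def
    using int_pred int_k by (simp add: set_integral_diff(2) set_integrable_mult_right)
  ultimately show ?thesis
    by simp
qed

lemma gamma_transform_of_real:
  assumes q: "q > 0" and a: "a > 0"
  shows "gamma_transform (q - 1) (complex_of_real a) = complex_of_real (Gamma q / a powr q)"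
proof -
  have "gamma_transform (q - 1) (complex_of_real a) = (LINT t:{0<..}|lborel. complex_of_real (t powr (q - 1) * exp (- a * t)))"
    unfolding gamma_transform_def gamma_kernel_def by (simp add: exp_of_real[symmetric])
  also have "\<dots> = complex_of_real (Gamma q / a powr q)"
    using set_integral_powr_mult_exp[OF q a] by (subst set_integral_complex_of_real) simp
  finally show ?thesis .
qed

lemma has_vector_derivative_gamma_transform_mult_powr:
  assumes q: "q > 0" and a: "a > 0"
  defines "w \<equiv> \<lambda>x. complex_of_real a + \<i> * complex_of_real x"
  shows "((\<lambda>x. gamma_transform (q - 1) (w x) * w x powr complex_of_real q) has_vector_derivative 0) (at x)"
proof -
  have w_nonpos: "w x \<notin> \<real>\<^sub>\<le>\<^sub>0"
    using a by (simp add: w_def complex_nonpos_Reals_iff)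
  have w_nonzero: "w x \<noteq> 0"
    using a by (simp add: w_def complex_eq_iff)
  have d_w: "(w has_vector_derivative \<i>) (at x)"
    unfolding w_def by (auto intro!: derivative_eq_intros)
  have d_powr: "((\<lambda>x. w x powr complex_of_real q) has_vector_derivative
      \<i> * (complex_of_real q * w x powr (complex_of_real q - 1))) (at x)"
    using field_vector_diff_chain_at[OF d_w has_field_derivative_powr[OF w_nonpos]] by (simp add: o_def)
  have d_transform: "((\<lambda>x. gamma_transform (q - 1) (w x)) has_vector_derivative
      - \<i> * gamma_transform q (w x)) (at x)"
    using has_vector_derivative_gamma_transform[of "q - 1" a x] q a by (simp add: w_def)
  have ibp: "w x * gamma_transform q (w x) = complex_of_real q * gamma_transform (q - 1) (w x)"
    using q a by (intro gamma_transform_integration_by_parts) (auto simp: w_def)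
  have "w x powr complex_of_real q = w x powr ((complex_of_real q - 1) + 1)"
    by simp
  also have "\<dots> = w x powr (complex_of_real q - 1) * w x powr 1"
    by (rule powr_add)
  also have "w x powr 1 = w x"
    using w_nonzero by (simp add: powr_def)
  finally have "gamma_transform (q - 1) (w x) * (\<i> * (complex_of_real q * w x powr (complex_of_real q - 1)))
        + (- \<i> * gamma_transform q (w x)) * w x powr complex_of_real q
      = \<i> * w x powr (complex_of_real q - 1) * (complex_of_real q * gamma_transform (q - 1) (w x) - w x * gamma_transform q (w x))"
    by (simp add: algebra_simps)
  also have "\<dots> = 0"
    by (simp add: ibp)
  finally have deriv_zero: "gamma_transform (q - 1) (w x) * (\<i> * (complex_of_real q * w x powr (complex_of_real q - 1)))
        + (- \<i> * gamma_transform q (w x)) * w x powr complex_of_real q = 0" .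
  show ?thesis
    using has_vector_derivative_mult[OF d_transform d_powr] unfolding deriv_zero .
qed

lemma gamma_transform_mult_powr:
  assumes q: "q > 0" and a: "a > 0"
  shows "gamma_transform (q - 1) (complex_of_real a + \<i> * complex_of_real x)
           * (complex_of_real a + \<i> * complex_of_real x) powr complex_of_real q
         = complex_of_real (Gamma q)"
proof -
  define H where "H x = gamma_transform (q - 1) (complex_of_real a + \<i> * complex_of_real x)
                          * (complex_of_real a + \<i> * complex_of_real x) powr complex_of_real q" for x
  obtain c where "\<And>x. H x = c"
    using has_vector_derivative_zero_constant[of UNIV H]
      has_vector_derivative_gamma_transform_mult_powr[OF q a] by (auto simp: H_def[abs_def])
  then have "H x = H 0"
    by simp
  also have "\<dots> = complex_of_real (Gamma q / a powr q) * complex_of_real (a powr q)"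
    using q a by (simp add: H_def gamma_transform_of_real powr_of_real)
  also have "\<dots> = complex_of_real (Gamma q / a powr q * a powr q)"
    by simp
  also have "Gamma q / a powr q * a powr q = Gamma q"
    using a by simp
  finally show ?thesis
    by (simp add: H_def)
qed

lemma norm_gamma_transform:
  assumes q: "q > 0" and z: "Re z > 0"
  shows "norm (gamma_transform (q - 1) z) = Gamma q / norm z powr q"
proof -
  have z_eq: "z = complex_of_real (Re z) + \<i> * complex_of_real (Im z)"
    by (simp add: complex_eq_iff)
  have "norm (gamma_transform (q - 1) z) * norm z powr q = Gamma q"
    using arg_cong[OF gamma_transform_mult_powr[OF q z, of "Im z"], of norm] q
    unfolding z_eq[symmetric] by (simp add: norm_mult norm_powr_real_powr' Gamma_real_pos)
  moreover have "norm z > 0"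
    using z by auto
  ultimately show ?thesis
    by (simp add: field_simps)
qed

lemma borel_measurable_mono_on_restrict_lborel:
  fixes f :: "real \<Rightarrow> real"
  assumes "mono_on S f"
  shows "f \<in> borel_measurable (restrict_space lborel S)"
proof -
  have "f \<in> borel_measurable (restrict_space borel S)"
    by (rule borel_measurable_mono_on_fnc[OF assms])
  then show ?thesis
    by (subst measurable_cong_sets[OF sets_restrict_space_cong[OF sets_lborel] refl])
qed

locale quantile_function =
  fixes M :: "real measure" and Q :: "real \<Rightarrow> real"
  assumes real_distribution: "real_distribution M"
    and mono: "mono_on {0..<1} Q"
    and le_iff_le_cdf: "\<And>s t. s \<in> {0<..<1} \<Longrightarrow> Q s \<le> t \<longleftrightarrow> s \<le> cdf M t"
    \<comment> \<open>not required at s = 0, where it fails for t below the support of M\<close>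
begin

lemma borel_measurable_Q [measurable]: "Q \<in> borel_measurable (restrict_space lborel {0..<1})"
  by (rule borel_measurable_mono_on_restrict_lborel[OF mono])

lemma distr_eq: "distr (restrict_space lborel {0..<1}) borel Q = M"
proof (rule cdf_unique)
  interpret uniform: prob_space "restrict_space lborel {0..<1::real}"
    by (rule prob_spaceI) (simp add: space_restrict_space emeasure_restrict_space)
  interpret M: real_distribution M
    by (rule real_distribution)
  show "real_distribution (distr (restrict_space lborel {0..<1}) borel Q)"
    by simp
  show "real_distribution M"
    by (rule real_distribution)
  show "cdf (distr (restrict_space lborel {0..<1}) borel Q) = cdf M"
  proof
    fix t
    define A where "A = Q -` {..t} \<inter> {0..<1}"
    define c where "c = cdf M t"
    have c: "0 \<le> c" "c \<le> 1"
      using M.cdf_nonneg M.cdf_bounded_prob by (auto simp: c_def)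
    have "A \<in> sets (restrict_space lborel {0..<1})"
      using measurable_sets[OF borel_measurable_Q, of "{..t}"] by (simp add: A_def space_restrict_space)
    then have A_sets: "A \<in> sets lborel"
      by (simp add: sets_restrict_space_iff A_def)
    have "AE s in lborel. s \<in> A \<longleftrightarrow> s \<in> {0<..<1} \<inter> {..c}"
      by (rule eventually_mono[OF AE_lborel_singleton[of 0]]) (auto simp: A_def c_def le_iff_le_cdf)
    then have "measure lborel A = measure lborel ({0<..<1} \<inter> {..c})"
      using A_sets by (intro measure_eq_AE) auto
    also have "\<dots> = c"
    proof (cases "c < 1")
      case True
      then have "{0<..<1} \<inter> {..c} = {0<..c}"
        by auto
      then show ?thesis
        using c by simp
    next
      case False
      then have "{0<..<1} \<inter> {..c} = {0<..<1::real}"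
        using c by auto
      then show ?thesis
        using False c by simp
    qed
    finally have "measure lborel A = c" .
    then show "cdf (distr (restrict_space lborel {0..<1}) borel Q) t = cdf M t"
      unfolding cdf_def c_def
      by (subst measure_distr) (auto simp: space_restrict_space measure_restrict_space A_def)
  qed
qed

lemma set_integral_eq:
  fixes h :: "real \<Rightarrow> 'b::{banach, second_countable_topology}"
  assumes [measurable]: "h \<in> borel_measurable borel"
  shows "(LINT s:{0..<1}|lborel. h (Q s)) = integral\<^sup>L M h"
proof -
  have "(LINT s:{0..<1}|lborel. h (Q s)) = integral\<^sup>L (restrict_space lborel {0..<1}) (\<lambda>s. h (Q s))"
    unfolding set_lebesgue_integral_def by (subst integral_restrict_space) auto
  also have "\<dots> = integral\<^sup>L (distr (restrict_space lborel {0..<1}) borel Q) h"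
    by (subst integral_distr) auto
  finally show ?thesis
    by (simp add: distr_eq)
qed

lemma set_nn_integral_eq:
  assumes [measurable]: "h \<in> borel_measurable borel"
  shows "(\<integral>\<^sup>+ s\<in>{0..<1}. h (Q s) \<partial>lborel) = (\<integral>\<^sup>+ y. h y \<partial>M)"
proof -
  have "(\<integral>\<^sup>+ s\<in>{0..<1}. h (Q s) \<partial>lborel) = (\<integral>\<^sup>+ s. h (Q s) \<partial>restrict_space lborel {0..<1})"
    by (subst nn_integral_restrict_space) auto
  also have "\<dots> = (\<integral>\<^sup>+ y. h y \<partial>distr (restrict_space lborel {0..<1}) borel Q)"
    by (subst nn_integral_distr) auto
  finally show ?thesis
    by (simp add: distr_eq)
qed

end

definition gamma_density :: "real \<Rightarrow> real \<Rightarrow> real \<Rightarrow> real" where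
  "gamma_density p r y = r powr p / Gamma p * (indicator {0<..} y * (y powr (p - 1) * exp (- r * y)))"

definition gamma_measure :: "real \<Rightarrow> real \<Rightarrow> real measure" where
  "gamma_measure p r = density lborel (\<lambda>y. ennreal (gamma_density p r y))"

lemma gamma_density_measurable [measurable]: "gamma_density p r \<in> borel_measurable borel"
  unfolding gamma_density_def by measurable

locale gamma_distribution =
  fixes p r :: real
  assumes shape_pos: "p > 0" and rate_pos: "r > 0"
begin

lemma gamma_density_nonneg: "gamma_density p r y \<ge> 0"
  using shape_pos rate_pos by (simp add: gamma_density_def Gamma_real_pos indicator_def)

lemma gamma_density_pos: "y > 0 \<Longrightarrow> gamma_density p r y > 0"
  using shape_pos rate_pos by (simp add: gamma_density_def Gamma_real_pos)

lemma nn_integral_gamma_density: "(\<integral>\<^sup>+ y. ennreal (gamma_density p r y) \<partial>lborel) = 1"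
proof -
  have "(\<integral>\<^sup>+ y. ennreal (gamma_density p r y) \<partial>lborel)
      = (\<integral>\<^sup>+ y. ennreal (r powr p / Gamma p) * ennreal (indicator {0<..} y * (y powr (p - 1) * exp (- r * y))) \<partial>lborel)"
    unfolding gamma_density_def using shape_pos rate_pos
    by (intro nn_integral_cong ennreal_mult) (auto simp: Gamma_real_pos indicator_def)
  also have "\<dots> = ennreal (r powr p / Gamma p) * ennreal (Gamma p / r powr p)"
    using nn_integral_powr_mult_exp[OF shape_pos rate_pos] by (subst nn_integral_cmult) simp_all
  also have "\<dots> = ennreal (r powr p / Gamma p * (Gamma p / r powr p))"
    using shape_pos rate_pos by (intro ennreal_mult[symmetric]) (auto simp: Gamma_real_pos)
  also have "\<dots> = 1"
    using Gamma_real_pos[OF shape_pos] rate_pos by simp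
  finally show ?thesis .
qed

sublocale real_distribution "gamma_measure p r"
proof -
  have "prob_space (gamma_measure p r)"
    by (rule prob_spaceI) (simp add: gamma_measure_def emeasure_density nn_integral_gamma_density)
  then show "real_distribution (gamma_measure p r)"
    by (simp add: real_distribution_def real_distribution_axioms_def gamma_measure_def)
qed

lemma emeasure_gamma_measure:
  "A \<in> sets borel \<Longrightarrow> emeasure (gamma_measure p r) A = (\<integral>\<^sup>+ y. ennreal (gamma_density p r y) * indicator A y \<partial>lborel)"
  unfolding gamma_measure_def by (simp add: emeasure_density)

lemma cdf_gamma_measure:
  "cdf (gamma_measure p r) t = r powr p / Gamma p * (LINT y:{0..t}|lborel. y powr (p - 1) * exp (- r * y))"
proof -
  have int: "set_integrable lborel {0<..t} (\<lambda>y. y powr (p - 1) * exp (- r * y))"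
    by (rule set_integrable_subset[OF set_integrable_powr_mult_exp[OF shape_pos rate_pos]]) auto
  have "emeasure (gamma_measure p r) {..t}
      = (\<integral>\<^sup>+ y. ennreal (r powr p / Gamma p * (indicator {0<..t} y * (y powr (p - 1) * exp (- r * y)))) \<partial>lborel)"
    unfolding emeasure_gamma_measure[OF atMost_borel]
    by (intro nn_integral_cong) (auto simp: gamma_density_def indicator_def)
  also have "\<dots> = ennreal (r powr p / Gamma p * (LINT y:{0<..t}|lborel. y powr (p - 1) * exp (- r * y)))"
    using int shape_pos rate_pos
    by (subst nn_integral_eq_integral)
       (auto simp: set_integrable_def set_lebesgue_integral_def indicator_def Gamma_real_pos)
  also have "(LINT y:{0<..t}|lborel. y powr (p - 1) * exp (- r * y)) = (LINT y:{0..t}|lborel. y powr (p - 1) * exp (- r * y))"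
    unfolding set_lebesgue_integral_def
    by (rule Bochner_Integration.integral_cong) (auto simp: indicator_def)
  finally have "emeasure (gamma_measure p r) {..t} = ennreal (r powr p / Gamma p * (LINT y:{0..t}|lborel. y powr (p - 1) * exp (- r * y)))" .
  moreover have "(LINT y:{0..t}|lborel. y powr (p - 1) * exp (- r * y)) \<ge> 0"
    unfolding set_lebesgue_integral_def by (simp add: indicator_def)
  ultimately show ?thesis
    using shape_pos rate_pos by (simp add: cdf_def measure_def Gamma_real_pos)
qed

lemma cdf_gamma_measure_nonpos: "t \<le> 0 \<Longrightarrow> cdf (gamma_measure p r) t = 0"
proof -
  assume t: "t \<le> 0"
  have "emeasure (gamma_measure p r) {..t} = (\<integral>\<^sup>+ (y::real). 0 \<partial>lborel)"
    unfolding emeasure_gamma_measure[OF atMost_borel]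
    using t by (intro nn_integral_cong) (auto simp: indicator_def gamma_density_def)
  then show ?thesis
    by (simp add: cdf_def measure_def)
qed

lemma cdf_gamma_measure_strict_mono:
  assumes "0 \<le> s" "s < t"
  shows "cdf (gamma_measure p r) s < cdf (gamma_measure p r) t"
proof -
  have "emeasure (gamma_measure p r) {s<..t} \<noteq> 0"
  proof
    assume "emeasure (gamma_measure p r) {s<..t} = 0"
    then have "AE y in lborel. ennreal (gamma_density p r y) * indicator {s<..t} y = 0"
      unfolding emeasure_gamma_measure[OF greaterThanAtMost_borel]
      by (subst (asm) nn_integral_0_iff_AE) auto
    then have "AE y in lborel. y \<notin> {s<..t}"
    proof (rule eventually_mono)
      fix y
      assume "ennreal (gamma_density p r y) * indicator {s<..t} y = 0"
      then show "y \<notin> {s<..t}"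
        using gamma_density_pos[of y] assms by (auto simp: indicator_def)
    qed
    then have "emeasure lborel {s<..t} = 0"
      by (subst (asm) AE_iff_measurable[of "{s<..t}"]) auto
    then show False
      using assms by simp
  qed
  then have "measure (gamma_measure p r) {s<..t} > 0"
    using emeasure_eq_measure[of "{s<..t}"] by (auto simp: less_le)
  then show ?thesis
    using cdf_diff_eq[OF assms(2)] by simp
qed

lemma isCont_cdf_gamma_measure: "isCont (cdf (gamma_measure p r)) t"
proof -
  have "emeasure (gamma_measure p r) {t} = (\<integral>\<^sup>+ y. ennreal (gamma_density p r y) * indicator {t} y \<partial>lborel)"
    by (rule emeasure_gamma_measure) simp
  also have "\<dots> = (\<integral>\<^sup>+ (y::real). 0 \<partial>lborel)"
    by (intro nn_integral_cong_AE eventually_mono[OF AE_lborel_singleton[of t]]) auto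
  finally have "emeasure (gamma_measure p r) {t} = 0"
    by simp
  then show ?thesis
    by (simp add: isCont_cdf measure_def)
qed

lemma cdf_gamma_measure_surj:
  assumes "0 \<le> s" "s < 1"
  obtains t where "t \<ge> 0" "cdf (gamma_measure p r) t = s"
proof -
  obtain T where T: "\<And>t. t \<ge> T \<Longrightarrow> cdf (gamma_measure p r) t > s"
    using order_tendstoD(1)[OF cdf_lim_at_top_prob assms(2)] by (auto simp: eventually_at_top_linorder)
  define T' where "T' = max T 0"
  have "cdf (gamma_measure p r) 0 \<le> s" "s \<le> cdf (gamma_measure p r) T'" "0 \<le> T'"
    using cdf_gamma_measure_nonpos[of 0] assms T[of T'] by (auto simp: T'_def)
  moreover have "continuous_on {0..T'} (cdf (gamma_measure p r))"
    using isCont_cdf_gamma_measure by (intro continuous_at_imp_continuous_on) auto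
  ultimately obtain t where "0 \<le> t" "cdf (gamma_measure p r) t = s"
    using IVT'[of "cdf (gamma_measure p r)" 0 s T'] by auto
  then show ?thesis
    using that by blast
qed

end

locale gamma_quantile = gamma_distribution p "b + 1/2" for p b :: real +
  assumes b_pos: "b > 0"
begin

lemma Dfun_eq_cdf: "Dfun p b t = cdf (gamma_measure p (b + 1/2)) t"
proof -
  have "(2 * b + 1) powr p = 2 powr p * (b + 1/2) powr p"
    using b_pos by (simp add: powr_mult[symmetric] algebra_simps)
  then show ?thesis
    unfolding Dfun_def cdf_gamma_measure by simp
qed

lemma strict_mono_on_Dfun_ln: "strict_mono_on {1..} (\<lambda>t. Dfun p b (ln t))"
  by (rule strict_mono_onI) (simp add: Dfun_eq_cdf cdf_gamma_measure_strict_mono)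

lemma
  assumes "s \<in> {0..<1}"
  shows ffun_ge_1: "ffun p b s \<ge> 1" and Dfun_ln_ffun: "Dfun p b (ln (ffun p b s)) = s"
proof -
  obtain t where "t \<ge> 0" "cdf (gamma_measure p (b + 1/2)) t = s"
    using cdf_gamma_measure_surj assms by auto
  then have img: "s \<in> (\<lambda>t. Dfun p b (ln t)) ` {1..}"
    by (intro image_eqI[of _ _ "exp t"]) (auto simp: Dfun_eq_cdf)
  have inj: "inj_on (\<lambda>t. Dfun p b (ln t)) {1..}"
    by (rule strict_mono_on_imp_inj_on[OF strict_mono_on_Dfun_ln])
  show "ffun p b s \<ge> 1" "Dfun p b (ln (ffun p b s)) = s"
    using the_inv_into_into[OF inj img, of "{1..}"] f_the_inv_into_f[OF inj img] assms
    by (auto simp: ffun_def)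
qed

lemma ln_ffun_le_iff:
  assumes "s \<in> {0..<1}"
  shows "ln (ffun p b s) \<le> t \<longleftrightarrow> 0 \<le> t \<and> s \<le> Dfun p b t"
proof -
  define y where "y = ln (ffun p b s)"
  have y: "y \<ge> 0" "Dfun p b y = s"
    using ffun_ge_1[OF assms] Dfun_ln_ffun[OF assms] by (auto simp: y_def)
  show ?thesis
    unfolding y_def[symmetric]
  proof
    assume "y \<le> t"
    then show "0 \<le> t \<and> s \<le> Dfun p b t"
      using y cdf_nondecreasing[of y t] by (auto simp: Dfun_eq_cdf)
  next
    assume "0 \<le> t \<and> s \<le> Dfun p b t"
    then show "y \<le> t"
      using cdf_gamma_measure_strict_mono[of t y] y by (cases "y \<le> t") (auto simp: Dfun_eq_cdf)
  qed
qed

sublocale quantile_function "gamma_measure p (b + 1/2)" "\<lambda>s. ln (ffun p b s)"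
proof (rule quantile_function.intro)
  show "real_distribution (gamma_measure p (b + 1/2))"
    by (rule real_distribution_axioms)
  show "mono_on {0..<1} (\<lambda>s. ln (ffun p b s))"
    by (rule mono_onI) (use ln_ffun_le_iff ffun_ge_1 Dfun_ln_ffun in fastforce)
  show "ln (ffun p b s) \<le> t \<longleftrightarrow> s \<le> cdf (gamma_measure p (b + 1/2)) t" if "s \<in> {0<..<1}" for s t
    using that ln_ffun_le_iff[of s t] cdf_gamma_measure_nonpos[of t]
    by (cases "t \<ge> 0") (auto simp: Dfun_eq_cdf)
qed

lemma suppf_ffun: "suppf (ffun p b) = {0..<1}"
  using ffun_ge_1 by (force simp: suppf_def ffun_def)

lemma m_plus_ffun:
  "m_plus (\<lambda>x. x) 0 (ffun p b) x
     = complex_of_real ((b + 1/2) powr p / Gamma p) * gamma_transform (p - 1) (complex_of_real b + \<i> * complex_of_real x)"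
proof -
  define h where "h y = complex_of_real (exp (y / 2)) * exp (- \<i> * complex_of_real x * complex_of_real y)" for y
  have h_measurable [measurable]: "h \<in> borel_measurable borel"
    unfolding h_def by measurable
  have "m_plus (\<lambda>x. x) 0 (ffun p b) x = (LINT s:{0..<1}|lborel. h (ln (ffun p b s)))"
    unfolding m_plus_def suppf_ffun
  proof (rule set_lebesgue_integral_cong)
    show "\<forall>s. s \<in> {0..<1} \<longrightarrow>
        complex_of_real (ffun p b s * \<bar>ffun p b s\<bar> powr ((0 - 1) / 2)) *
          exp (- \<i> * complex_of_real x * complex_of_real (ln \<bar>ffun p b s\<bar>)) = h (ln (ffun p b s))"
    proof (intro allI impI)
      fix s :: real
      assume "s \<in> {0..<1}"
      then have f: "ffun p b s = exp (ln (ffun p b s))"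
        using ffun_ge_1[of s] by simp
      have "exp L * exp L powr ((0 - 1) / 2) = exp (L / 2)" for L :: real
        by (simp add: powr_def exp_add[symmetric])
      then show "complex_of_real (ffun p b s * \<bar>ffun p b s\<bar> powr ((0 - 1) / 2)) *
          exp (- \<i> * complex_of_real x * complex_of_real (ln \<bar>ffun p b s\<bar>)) = h (ln (ffun p b s))"
        unfolding h_def by (subst (1 2 3) f) simp
    qed
  qed simp
  also have "\<dots> = integral\<^sup>L (gamma_measure p (b + 1/2)) h"
    by (rule set_integral_eq) (rule h_measurable)
  also have "\<dots> = (LINT y|lborel. gamma_density p (b + 1/2) y *\<^sub>R h y)"
    unfolding gamma_measure_def by (subst integral_density) (auto simp: gamma_density_nonneg)
  also have "\<dots> = (LINT y:{0<..}|lborel. complex_of_real ((b + 1/2) powr p / Gamma p)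
                      * gamma_kernel (p - 1) (complex_of_real b + \<i> * complex_of_real x) y)"
    unfolding set_lebesgue_integral_def
  proof (rule Bochner_Integration.integral_cong[OF refl])
    fix y
    have "exp (- (b + 1/2) * y) * exp (y / 2) = exp (- b * y)"
      by (simp add: exp_add[symmetric] algebra_simps)
    moreover have "exp (- (complex_of_real b + \<i> * complex_of_real x) * complex_of_real y)
        = complex_of_real (exp (- b * y)) * exp (- \<i> * complex_of_real x * complex_of_real y)"
      by (simp add: exp_of_real[symmetric] exp_add[symmetric] algebra_simps)
    ultimately show "gamma_density p (b + 1/2) y *\<^sub>R h y = indicator {0<..} y *\<^sub>R
        (complex_of_real ((b + 1/2) powr p / Gamma p) * gamma_kernel (p - 1) (complex_of_real b + \<i> * complex_of_real x) y)"
      unfolding gamma_density_def h_def gamma_kernel_def scaleR_conv_of_real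
      by (simp add: mult_ac flip: of_real_mult)
  qed
  also have "\<dots> = complex_of_real ((b + 1/2) powr p / Gamma p) * gamma_transform (p - 1) (complex_of_real b + \<i> * complex_of_real x)"
    unfolding gamma_transform_def by (rule set_integral_mult_right)
  finally show ?thesis .
qed

lemma m_minus_ffun_eq_m_plus: "m_minus (\<lambda>x. x) 0 (ffun p b) x = m_plus (\<lambda>x. x) 0 (ffun p b) x"
proof -
  have "\<forall>s. s \<in> {0..<1} \<longrightarrow> sgn (ffun p b s) = 1"
    using ffun_ge_1 by fastforce
  then show ?thesis
    unfolding m_minus_def m_plus_def suppf_ffun by (intro set_lebesgue_integral_cong) simp_all
qed

lemma norm_m_plus_ffun:
  "norm (m_plus (\<lambda>x. x) 0 (ffun p b) x)
     = ((b + 1/2) / norm (complex_of_real b + \<i> * complex_of_real x)) powr p"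
proof -
  have "norm (gamma_transform (p - 1) (complex_of_real b + \<i> * complex_of_real x))
      = Gamma p / norm (complex_of_real b + \<i> * complex_of_real x) powr p"
    using shape_pos b_pos by (intro norm_gamma_transform) auto
  then have "norm (m_plus (\<lambda>x. x) 0 (ffun p b) x)
      = (b + 1/2) powr p / Gamma p * (Gamma p / norm (complex_of_real b + \<i> * complex_of_real x) powr p)"
    using Gamma_real_pos[OF shape_pos] by (simp only: m_plus_ffun norm_mult norm_of_real) simp
  also have "\<dots> = ((b + 1/2) / norm (complex_of_real b + \<i> * complex_of_real x)) powr p"
    using Gamma_real_pos[OF shape_pos] b_pos by (simp add: powr_divide)
  finally show ?thesis .
qed

lemma set_nn_integral_sqrt_ffun_finite:
  "(\<integral>\<^sup>+ s\<in>suppf (ffun p b). ennreal (\<bar>ffun p b s\<bar> powr (1/2)) \<partial>lborel) < \<infinity>"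
proof -
  define h where "h y = ennreal (exp (y / 2))" for y
  have h_measurable [measurable]: "h \<in> borel_measurable borel"
    unfolding h_def by measurable
  have "(\<integral>\<^sup>+ s\<in>suppf (ffun p b). ennreal (\<bar>ffun p b s\<bar> powr (1/2)) \<partial>lborel)
      = (\<integral>\<^sup>+ s\<in>{0..<1}. h (ln (ffun p b s)) \<partial>lborel)"
    unfolding suppf_ffun
  proof (rule nn_integral_cong)
    fix s :: real
    show "ennreal (\<bar>ffun p b s\<bar> powr (1/2)) * indicator {0..<1} s = h (ln (ffun p b s)) * indicator {0..<1} s"
    proof (cases "s \<in> {0..<1}")
      case True
      then have "ffun p b s \<ge> 1"
        by (rule ffun_ge_1)
      then show ?thesis
        by (simp add: h_def powr_def)
    qed simp
  qed
  also have "\<dots> = (\<integral>\<^sup>+ y. h y \<partial>gamma_measure p (b + 1/2))"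
    by (rule set_nn_integral_eq) (rule h_measurable)
  also have "\<dots> = (\<integral>\<^sup>+ y. ennreal (gamma_density p (b + 1/2) y) * h y \<partial>lborel)"
    unfolding gamma_measure_def by (rule nn_integral_density; measurable)
  also have "\<dots> = (\<integral>\<^sup>+ y. ennreal ((b + 1/2) powr p / Gamma p)
                      * ennreal (indicator {0<..} y * (y powr (p - 1) * exp (- b * y))) \<partial>lborel)"
  proof (rule nn_integral_cong)
    fix y :: real
    have "exp (- (b + 1/2) * y) * exp (y / 2) = exp (- b * y)"
      by (simp add: exp_add[symmetric] algebra_simps)
    then show "ennreal (gamma_density p (b + 1/2) y) * h y = ennreal ((b + 1/2) powr p / Gamma p)
                 * ennreal (indicator {0<..} y * (y powr (p - 1) * exp (- b * y)))"
      unfolding h_def gamma_density_def using Gamma_real_pos[OF shape_pos] b_pos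
      by (simp add: ennreal_mult'[symmetric] ennreal_mult[symmetric] mult_ac indicator_def)
  qed
  also have "\<dots> = ennreal ((b + 1/2) powr p / Gamma p) * ennreal (Gamma p / b powr p)"
    using nn_integral_powr_mult_exp[OF shape_pos b_pos] by (subst nn_integral_cmult) simp_all
  also have "\<dots> < \<infinity>"
    by (simp add: ennreal_mult_less_top)
  finally show ?thesis .
qed

end

lemma one_plus_abs_powr_neg_le:
  fixes a x p :: real
  assumes a: "a \<ge> 1/2" and p: "p \<ge> 0"
  shows "(1 + \<bar>x\<bar>) powr (- p) \<le> ((a + 1/2) / norm (complex_of_real a + \<i> * complex_of_real x)) powr p"
proof -
  define z where "z = complex_of_real a + \<i> * complex_of_real x"
  have z_pos: "norm z > 0"
    using a by (auto simp: z_def complex_eq_iff)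
  have "norm z \<le> a + \<bar>x\<bar>"
    using norm_triangle_ineq[of "complex_of_real a" "\<i> * complex_of_real x"] a
    by (simp add: z_def norm_mult)
  also have "\<dots> \<le> (a + 1/2) * (1 + \<bar>x\<bar>)"
  proof -
    have "1 * \<bar>x\<bar> \<le> (a + 1/2) * \<bar>x\<bar>"
      using a by (intro mult_right_mono) auto
    moreover have "(a + 1/2) * (1 + \<bar>x\<bar>) = a + 1/2 + (a + 1/2) * \<bar>x\<bar>"
      by (simp add: algebra_simps)
    ultimately show ?thesis
      by linarith
  qed
  finally have "1 / (1 + \<bar>x\<bar>) \<le> (a + 1/2) / norm z"
    using z_pos by (simp add: field_simps)
  then have "(1 / (1 + \<bar>x\<bar>)) powr p \<le> ((a + 1/2) / norm z) powr p"
    using p by (intro powr_mono2) auto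
  then show ?thesis
    by (simp add: z_def powr_minus_divide powr_divide)
qed

theorem mainTheorem7:
  fixes p b :: real
  assumes "p > 0" and "b \<ge> 1"
  defines "c \<equiv> (0::real)" and "u \<equiv> (\<lambda>x::real. x)" and "\<beta> \<equiv> (1::real)"
  shows "(\<integral>\<^sup>+ s\<in>suppf (ffun p b). ennreal (\<bar>ffun p b s\<bar> powr (\<beta> + (c-1)/2)) \<partial>lborel) < \<infinity>
    \<and> (\<exists>\<gamma>>0. \<forall>x::real.
          norm (m_plus u c (ffun p b) x) \<ge> \<gamma> * (1 + \<bar>x\<bar>) powr (-p)
        \<and> norm (m_minus u c (ffun p b) x) \<ge> \<gamma> * (1 + \<bar>x\<bar>) powr (-p))"
proof -
  interpret gamma_quantile p b
    using assms by unfold_locales auto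
  have "(1 + \<bar>x\<bar>) powr (- p) \<le> norm (m_plus (\<lambda>x. x) 0 (ffun p b) x)" for x
    unfolding norm_m_plus_ffun using one_plus_abs_powr_neg_le[of b p x] assms by simp
  then show ?thesis
    unfolding \<beta>_def c_def u_def
    using set_nn_integral_sqrt_ffun_finite m_minus_ffun_eq_m_plus by (intro conjI exI[of _ 1]) auto
qed

end
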